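(* Let $F$ be a germ of holomorphic diffeomorphism of $(\mathbb C^2,0)$ of the form $F(x,y)=(x+p(x,y),y+q(x,y))$ with $\min\{\nu(p),\nu(q)\}\ge2$, and let $X=a\frac{\partial}{\partial x}+b\frac{\partial}{\partial y}$ be a formal vector field with $a,b\in\mathbb C[[x,y]]$, $\min\{\nu(a),\nu(b)\}\ge2$, such that $F=\mathrm{Exp}(X)$, i.e. $F=(\exp X(x),\exp X(y))$. Let $\pi:(M,D)\to(\mathbb C^2,0)$ be the blow-up at the origin, let $\tilde F$ be the unique germ of diffeomorphism of $(M,D)$ with $\pi\circ\tilde F=F\circ\pi$ and $\tilde F|_D=\mathrm{id}_D$, and let $\tilde X$ be the formal vector field along $D$ with $D\pi\cdot\tilde X=X\circ\pi$. Then for every characteristic direction $p\in D$ of $F$ we have $$\tilde F_p=\mathrm{Exp}(\tilde X_p),$$ where $\tilde F_p$, $\tilde X_p$ are the germs at $p$ and $\mathrm{Exp}$ is computed in local coordinates $(u,w)$ centered at $p$, i.e. $\mathrm{Exp}(\tilde X_p)=(\exp\tilde X_p(u),\exp\tilde X_p(w))$.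
   Context: $\nu(h)$ is the order of a power series $h$. For a formal vector field $Y$ of order $\ge2$ and a formal series $g$, $\exp Y(g)=\sum_{j\ge0}\frac1{j!}Y^j(g)$ with $Y^0(g)=g$, $Y^{j+1}(g)=Y(Y^j(g))$, the vector field acting as a derivation. Write $F(z)=z+P_k(z)+\cdots$ with $P_j$ homogeneous of degree $j$ and $P_k\not\equiv0$; a characteristic direction of $F$ is $[v]\in\mathbb P^1$ with $P_k(v)=\lambda v$ for some $\lambda\in\mathbb C$, and points of $D=\pi^{-1}(0)\cong\mathbb P^1$ are identified with directions. (At such points $\tilde F_p$ is tangent to the identity and $\tilde X_p$ has order $\ge2$.) *)

theory Defs
  imports "HOL-Analysis.Analysis"
begin

text \<open>Formal power series in two variables, represented by their coefficient
functions: f i j is the coefficient of the monomial x^i y^j.\<close>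

type_synonym ps2 = "nat \<Rightarrow> nat \<Rightarrow> complex"

definition ps_const :: "complex \<Rightarrow> ps2" where
  "ps_const c = (\<lambda>i j. if i = 0 \<and> j = 0 then c else 0)"

definition ps_X :: ps2 where
  "ps_X = (\<lambda>i j. if i = 1 \<and> j = 0 then 1 else 0)"

definition ps_Y :: ps2 where
  "ps_Y = (\<lambda>i j. if i = 0 \<and> j = 1 then 1 else 0)"

definition ps_add :: "ps2 \<Rightarrow> ps2 \<Rightarrow> ps2" where
  "ps_add f g = (\<lambda>i j. f i j + g i j)"

definition ps_sub :: "ps2 \<Rightarrow> ps2 \<Rightarrow> ps2" where
  "ps_sub f g = (\<lambda>i j. f i j - g i j)"

definition ps_mult :: "ps2 \<Rightarrow> ps2 \<Rightarrow> ps2" where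
  "ps_mult f g = (\<lambda>i j. \<Sum>i1\<le>i. \<Sum>j1\<le>j. f i1 j1 * g (i - i1) (j - j1))"

text \<open>Quotient in the ring of formal power series (meaningful when the
denominator is a unit, i.e. has nonzero constant term).\<close>
definition ps_div :: "ps2 \<Rightarrow> ps2 \<Rightarrow> ps2" where
  "ps_div f g = (THE h. ps_mult g h = f)"

text \<open>Division by the first variable (exact when f is divisible by it).\<close>
definition ps_divX :: "ps2 \<Rightarrow> ps2" where
  "ps_divX f = (\<lambda>i j. f (Suc i) j)"

definition ps_dx :: "ps2 \<Rightarrow> ps2" where
  "ps_dx f = (\<lambda>i j. of_nat (Suc i) * f (Suc i) j)"

definition ps_dy :: "ps2 \<Rightarrow> ps2" where
  "ps_dy f = (\<lambda>i j. of_nat (Suc j) * f i (Suc j))"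

definition ps_order_ge :: "ps2 \<Rightarrow> nat \<Rightarrow> bool" where
  "ps_order_ge f k \<longleftrightarrow> (\<forall>i j. i + j < k \<longrightarrow> f i j = 0)"

definition ps_convergent :: "ps2 \<Rightarrow> bool" where
  "ps_convergent f \<longleftrightarrow>
     (\<exists>r>0. (\<lambda>(i, j). norm (f i j) * r ^ (i + j)) summable_on (UNIV :: (nat \<times> nat) set))"

definition vf_apply :: "ps2 \<Rightarrow> ps2 \<Rightarrow> ps2 \<Rightarrow> ps2" where
  "vf_apply a b g = ps_add (ps_mult a (ps_dx g)) (ps_mult b (ps_dy g))"

text \<open>For a vector field of order \<ge> 2 one has
\<nu>(Y^k g) \<ge> k, so the coefficient of x^i y^j only receives contributions from
k \<le> i + j; the formal sum is thus computed coefficientwise by a finite sum.\<close>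
definition vf_exp :: "ps2 \<Rightarrow> ps2 \<Rightarrow> ps2 \<Rightarrow> ps2" where
  "vf_exp a b g = (\<lambda>i j. \<Sum>k\<le>i + j. ((vf_apply a b ^^ k) g) i j / fact k)"

definition homog_eval :: "ps2 \<Rightarrow> nat \<Rightarrow> complex \<Rightarrow> complex \<Rightarrow> complex" where
  "homog_eval f k v1 v2 = (\<Sum>i\<le>k. f i (k - i) * v1 ^ i * v2 ^ (k - i))"

definition homog_zero :: "ps2 \<Rightarrow> nat \<Rightarrow> bool" where
  "homog_zero f k \<longleftrightarrow> (\<forall>i\<le>k. f i (k - i) = 0)"

definition char_direction :: "ps2 \<Rightarrow> ps2 \<Rightarrow> complex \<Rightarrow> complex \<Rightarrow> bool" where
  "char_direction p q v1 v2 \<longleftrightarrow> (v1, v2) \<noteq> (0, 0) \<and>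
     (\<exists>k. \<not> (homog_zero p k \<and> homog_zero q k) \<and>
          (\<forall>m<k. homog_zero p m \<and> homog_zero q m) \<and>
          (\<exists>lam. homog_eval p k v1 v2 = lam * v1 \<and> homog_eval q k v1 v2 = lam * v2))"

text \<open>Chart 1 centred at the direction [1:c]:
  \<pi>(u,w) = (u, u (c + w)).  Chart 2 centred at [0:1]: \<pi>(u,w) = (u w, u).
  Pullback f \<circ> \<pi> as a formal series in (u,w) (first variable u).\<close>
definition pull1 :: "complex \<Rightarrow> ps2 \<Rightarrow> ps2" where
  "pull1 c f = (\<lambda>k l. \<Sum>n\<le>k. f (k - n) n * of_nat (n choose l) * c ^ (n - l))"

definition pull2 :: "ps2 \<Rightarrow> ps2" where
  "pull2 f = (\<lambda>k l. if l \<le> k then f l (k - l) else 0)"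

text \<open>Lift of F = (x+p, y+q) in chart 1 at [1:c]: coordinates
  (x', y'/x' - c) with (x',y') = F \<circ> \<pi>.\<close>
definition lift1_F :: "complex \<Rightarrow> ps2 \<Rightarrow> ps2 \<Rightarrow> ps2 \<times> ps2" where
  "lift1_F c p q =
    (ps_add ps_X (pull1 c p),
     ps_sub (ps_div (ps_divX (pull1 c (ps_add ps_Y q)))
                    (ps_divX (pull1 c (ps_add ps_X p))))
            (ps_const c))"

text \<open>Lift of F in chart 2 at [0:1]: coordinates (y', x'/y').\<close>
definition lift2_F :: "ps2 \<Rightarrow> ps2 \<Rightarrow> ps2 \<times> ps2" where
  "lift2_F p q =
    (ps_add ps_X (pull2 q),
     ps_div (ps_divX (pull2 (ps_add ps_X p))) (ps_divX (pull2 (ps_add ps_Y q))))"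

text \<open>Lift of X = a d/dx + b d/dy: the components (a~, b~) with
  D\<pi> . X~ = X \<circ> \<pi>.\<close>
definition lift1_X :: "complex \<Rightarrow> ps2 \<Rightarrow> ps2 \<Rightarrow> ps2 \<times> ps2" where
  "lift1_X c a b =
    (pull1 c a,
     ps_divX (ps_sub (pull1 c b) (ps_mult (ps_add (ps_const c) ps_Y) (pull1 c a))))"

definition lift2_X :: "ps2 \<Rightarrow> ps2 \<Rightarrow> ps2 \<times> ps2" where
  "lift2_X a b =
    (pull2 b,
     ps_divX (ps_sub (pull2 a) (ps_mult ps_Y (pull2 b))))"

end

theory Submission
  imports Defs "HOL-Computational_Algebra.Formal_Power_Series"
begin

text \<open>
  For a vector field X of order at least 2, G \<mapsto> exp X (G) is a ring endomorphism of
  C[[x,y]]: multiplicativity is the Leibniz rule for the divided powers X^n/n!, and every identity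
  can be checked on truncations because X^n G has order at least n. Pulling back along the chart
  \<pi>(u, w) = (u, u (c + w)) of the blow-up is a ring homomorphism intertwining X~ with X, hence
  exp X~ (G \<circ> \<pi>) = (exp X G) \<circ> \<pi>. For G = x this is the first component of F~; for G = y,
  since y \<circ> \<pi> = u (c + w), it gives exp X~ (u) (c + exp X~ (w)) = (y + q) \<circ> \<pi>, and dividing
  by u yields the second component. That [1 : c] is characteristic is exactly what makes X~ of order
  at least 2 at the point, as (a, b) and (p, q) have the same quadratic part. The chart at [0 : 1]
  reduces to the chart at [1 : 0] by exchanging x and y.
\<close>

unbundle no vec_syntax
notation fps_nth (infixl \<open>$\<close> 75)

section \<open>Two-variable formal power series\<close>

text \<open>C[[x,y]] is modelled as (C[[y]])[[x]]: fps_X and fps_deriv are x and d/dx.\<close>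

type_synonym fps2 = "complex fps fps"

definition ps2_of :: "fps2 \<Rightarrow> ps2" where
  "ps2_of A = (\<lambda>i j. A $ i $ j)"

definition fps2_of :: "ps2 \<Rightarrow> fps2" where
  "fps2_of f = Abs_fps (\<lambda>i. Abs_fps (\<lambda>j. f i j))"

definition fps2_const :: "complex \<Rightarrow> fps2" where
  "fps2_const c = fps_const (fps_const c)"

definition fps2_Y :: fps2 where
  "fps2_Y = fps_const fps_X"

definition fps2_deriv_Y :: "fps2 \<Rightarrow> fps2" where
  "fps2_deriv_Y A = Abs_fps (\<lambda>i. fps_deriv (A $ i))"

lemma fps2_of_nth [simp]: "fps2_of f $ i $ j = f i j"
  by (simp add: fps2_of_def)

lemma ps2_of_fps2_of [simp]: "ps2_of (fps2_of f) = f"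
  by (simp add: ps2_of_def)

lemma fps2_of_ps2_of [simp]: "fps2_of (ps2_of A) = A"
  by (simp add: ps2_of_def fps2_of_def fps_eq_iff)

lemma ps2_of_inject: "ps2_of A = ps2_of B \<longleftrightarrow> A = B"
  by (metis fps2_of_ps2_of)

lemma fps2_mult_nth:
  "(A * B :: fps2) $ i $ j = (\<Sum>i1\<le>i. \<Sum>j1\<le>j. A $ i1 $ j1 * B $ (i - i1) $ (j - j1))"
  by (simp add: fps_mult_nth fps_sum_nth atLeast0AtMost)

lemma fps2_sum_nth: "(sum f S :: fps2) $ i $ j = (\<Sum>k\<in>S. f k $ i $ j)"
  by (simp add: fps_sum_nth)

lemma fps2_const_nth [simp]: "fps2_const c $ i $ j = (if i = 0 \<and> j = 0 then c else 0)"
  by (simp add: fps2_const_def)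

lemma fps2_const_mult_nth [simp]: "(fps2_const c * F) $ i $ j = c * F $ i $ j"
  by (simp add: fps2_const_def)

lemma fps2_const_mult: "fps2_const (x * y) = fps2_const x * fps2_const y"
  by (simp add: fps2_const_def)

lemma fps2_const_add: "fps2_const (x + y) = fps2_const x + fps2_const y"
  by (simp add: fps2_const_def)

lemma fps2_const_0 [simp]: "fps2_const 0 = 0"
  by (simp add: fps2_const_def)

lemma fps2_const_1 [simp]: "fps2_const 1 = 1"
  by (simp add: fps2_const_def)

lemma fps2_Y_nth [simp]: "fps2_Y $ i $ j = (if i = 0 \<and> j = 1 then 1 else 0)"
  by (simp add: fps2_Y_def fps_X_def)

lemma fps2_deriv_Y_nth [simp]: "fps2_deriv_Y A $ i $ j = of_nat (Suc j) * A $ i $ Suc j"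
  by (simp add: fps2_deriv_Y_def)

lemma fps2_deriv_nth: "(fps_deriv A :: fps2) $ i $ j = of_nat (Suc i) * A $ Suc i $ j"
  by (simp add: fps_of_nat[symmetric])

lemma fps2_deriv_Y_add [simp]: "fps2_deriv_Y (A + B) = fps2_deriv_Y A + fps2_deriv_Y B"
  by (simp add: fps_eq_iff algebra_simps)

lemma fps2_deriv_Y_zero [simp]: "fps2_deriv_Y 0 = 0"
  by (simp add: fps_eq_iff)

lemma fps2_deriv_Y_mult [simp]: "fps2_deriv_Y (A * B) = A * fps2_deriv_Y B + fps2_deriv_Y A * B"
  by (simp add: fps2_deriv_Y_def fps_eq_iff fps_mult_nth fps_deriv_sum sum.distrib[symmetric]
      del: fps_deriv_nth)

lemma fps2_deriv_Y_fps_const [simp]: "fps2_deriv_Y (fps_const c) = fps_const (fps_deriv c)"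
  by (simp add: fps_eq_iff)

lemma fps2_deriv_Y_fps_X [simp]: "fps2_deriv_Y fps_X = 0"
  by (rule fps_ext) (simp add: fps2_deriv_Y_def fps_X_def)

lemma ps_mult_ps2_of: "ps_mult (ps2_of A) (ps2_of B) = ps2_of (A * B)"
  by (simp add: ps_mult_def ps2_of_def fps2_mult_nth)

lemma ps_add_ps2_of: "ps_add (ps2_of A) (ps2_of B) = ps2_of (A + B)"
  by (simp add: ps_add_def ps2_of_def)

lemma ps_sub_ps2_of: "ps_sub (ps2_of A) (ps2_of B) = ps2_of (A - B)"
  by (simp add: ps_sub_def ps2_of_def)

lemma ps_const_eq_ps2_of: "ps_const c = ps2_of (fps2_const c)"
  by (simp add: ps_const_def ps2_of_def)

lemma ps_X_eq_ps2_of: "ps_X = ps2_of fps_X"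
  by (auto simp add: ps_X_def ps2_of_def fun_eq_iff fps_X_def)

lemma ps_Y_eq_ps2_of: "ps_Y = ps2_of fps2_Y"
  by (auto simp add: ps_Y_def ps2_of_def fun_eq_iff)

lemma ps_dx_ps2_of: "ps_dx (ps2_of A) = ps2_of (fps_deriv A)"
  by (simp add: ps_dx_def ps2_of_def fun_eq_iff fps_of_nat[symmetric])

lemma ps_dy_ps2_of: "ps_dy (ps2_of A) = ps2_of (fps2_deriv_Y A)"
  by (simp add: ps_dy_def ps2_of_def)

lemma ps_divX_ps2_of: "ps_divX (ps2_of A) = ps2_of (fps_shift 1 A)"
  by (simp add: ps_divX_def ps2_of_def)

lemma ps_div_ps2_of:
  assumes "D * Z = N" "D \<noteq> 0"
  shows "ps_div (ps2_of N) (ps2_of D) = ps2_of Z"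
  unfolding ps_div_def
proof (rule the_equality)
  show "ps_mult (ps2_of D) (ps2_of Z) = ps2_of N"
    by (simp add: ps_mult_ps2_of assms(1))
next
  fix h assume "ps_mult (ps2_of D) h = ps2_of N"
  then have "ps2_of (D * fps2_of h) = ps2_of (D * Z)"
    using ps_mult_ps2_of[of D "fps2_of h"] assms(1) by simp
  then have "fps2_of h = Z"
    using assms(2) by (simp add: ps2_of_inject)
  then show "h = ps2_of Z" by auto
qed

section \<open>Order\<close>

definition fps2_order_ge :: "fps2 \<Rightarrow> nat \<Rightarrow> bool" where
  "fps2_order_ge F m \<longleftrightarrow> (\<forall>i j. i + j < m \<longrightarrow> F $ i $ j = 0)"

lemma ps_order_ge_ps2_of: "ps_order_ge (ps2_of F) m \<longleftrightarrow> fps2_order_ge F m"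
  by (simp add: ps_order_ge_def fps2_order_ge_def ps2_of_def)

lemma fps2_order_ge_0 [simp]: "fps2_order_ge F 0"
  by (simp add: fps2_order_ge_def)

lemma fps2_order_ge_zero [simp]: "fps2_order_ge 0 m"
  by (simp add: fps2_order_ge_def)

lemma fps2_order_ge_mono: "fps2_order_ge F m \<Longrightarrow> n \<le> m \<Longrightarrow> fps2_order_ge F n"
  by (simp add: fps2_order_ge_def)

lemma fps2_order_ge_add: "fps2_order_ge F m \<Longrightarrow> fps2_order_ge G m \<Longrightarrow> fps2_order_ge (F + G) m"
  by (simp add: fps2_order_ge_def)

lemma fps2_order_ge_diff_commute: "fps2_order_ge (F - G) m \<longleftrightarrow> fps2_order_ge (G - F) m"
  by (auto simp add: fps2_order_ge_def)

lemma fps2_order_ge_diff_trans: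
  "fps2_order_ge (F - G) m \<Longrightarrow> fps2_order_ge (G - H) m \<Longrightarrow> fps2_order_ge (F - H) m"
  using fps2_order_ge_add[of "F - G" m "G - H"] by simp

lemma fps2_order_ge_const_mult: "fps2_order_ge F m \<Longrightarrow> fps2_order_ge (fps2_const c * F) m"
  by (simp add: fps2_order_ge_def)

lemma fps2_order_ge_sum:
  "(\<And>k. k \<in> S \<Longrightarrow> fps2_order_ge (f k) m) \<Longrightarrow> fps2_order_ge (sum f S) m"
  by (induct S rule: infinite_finite_induct) (auto intro: fps2_order_ge_add)

lemma fps2_order_ge_mult:
  assumes "fps2_order_ge F m" "fps2_order_ge G n"
  shows "fps2_order_ge (F * G) (m + n)"
  unfolding fps2_order_ge_def fps2_mult_nth
proof (intro allI impI sum.neutral ballI)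
  fix i j i1 j1 assume "i + j < m + n" "i1 \<in> {..i}" "j1 \<in> {..j}"
  with assms show "F $ i1 $ j1 * G $ (i - i1) $ (j - j1) = 0"
    unfolding fps2_order_ge_def by (cases "i1 + j1 < m") auto
qed

lemma fps2_order_ge_mult_cong:
  assumes "fps2_order_ge (F - F') m" "fps2_order_ge (G - G') m"
  shows "fps2_order_ge (F * G - F' * G') m"
proof -
  have "F * G - F' * G' = (F - F') * G + F' * (G - G')"
    by (simp add: algebra_simps)
  moreover have "fps2_order_ge ((F - F') * G) m" "fps2_order_ge (F' * (G - G')) m"
    using fps2_order_ge_mult[OF assms(1) fps2_order_ge_0[of G]]
      fps2_order_ge_mult[OF fps2_order_ge_0[of F'] assms(2)] by auto
  ultimately show ?thesis
    by (auto intro: fps2_order_ge_add)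
qed

lemma fps2_order_ge_deriv: "fps2_order_ge F m \<Longrightarrow> fps2_order_ge (fps_deriv F) (m - 1)"
  by (simp add: fps2_order_ge_def fps_of_nat[symmetric])

lemma fps2_order_ge_deriv_Y: "fps2_order_ge F m \<Longrightarrow> fps2_order_ge (fps2_deriv_Y F) (m - 1)"
  by (simp add: fps2_order_ge_def)

lemma fps2_eqI_order_ge:
  assumes "\<And>m. fps2_order_ge (F - G) m"
  shows "F = G"
proof -
  have "F $ i $ j = G $ i $ j" for i j
    using assms[of "Suc (i + j)"] by (simp add: fps2_order_ge_def)
  then show ?thesis
    by (simp add: fps_eq_iff)
qed

lemma fps2_nth_eq_if_order_ge_diff:
  "fps2_order_ge (F - G) m \<Longrightarrow> i + j < m \<Longrightarrow> F $ i $ j = G $ i $ j"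
  by (simp add: fps2_order_ge_def)

section \<open>Vector fields and their exponential\<close>

definition fps2_vf :: "fps2 \<Rightarrow> fps2 \<Rightarrow> fps2 \<Rightarrow> fps2" where
  "fps2_vf a b G = a * fps_deriv G + b * fps2_deriv_Y G"

lemma vf_apply_ps2_of: "vf_apply (ps2_of a) (ps2_of b) (ps2_of G) = ps2_of (fps2_vf a b G)"
  by (simp add: vf_apply_def fps2_vf_def ps_dx_ps2_of ps_dy_ps2_of ps_mult_ps2_of ps_add_ps2_of)

lemma vf_apply_pow_ps2_of:
  "(vf_apply (ps2_of a) (ps2_of b) ^^ n) (ps2_of G) = ps2_of ((fps2_vf a b ^^ n) G)"
  by (induct n) (simp_all add: vf_apply_ps2_of)

lemma fps2_vf_add [simp]: "fps2_vf a b (F + G) = fps2_vf a b F + fps2_vf a b G"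
  by (simp add: fps2_vf_def algebra_simps)

lemma fps2_vf_mult: "fps2_vf a b (F * G) = F * fps2_vf a b G + fps2_vf a b F * G"
  by (simp add: fps2_vf_def algebra_simps)

lemma fps2_vf_zero [simp]: "fps2_vf a b 0 = 0"
  by (simp add: fps2_vf_def fps_eq_iff)

lemma fps2_vf_const [simp]: "fps2_vf a b (fps2_const c) = 0"
  by (simp add: fps2_vf_def fps2_const_def)

lemma fps2_vf_const_mult [simp]: "fps2_vf a b (fps2_const c * F) = fps2_const c * fps2_vf a b F"
  by (simp add: fps2_vf_mult)

lemma fps2_vf_sum: "fps2_vf a b (sum f S) = (\<Sum>k\<in>S. fps2_vf a b (f k))"
  by (induct S rule: infinite_finite_induct) auto

lemma fps2_vf_fps_X [simp]: "fps2_vf a b fps_X = a"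
  by (simp add: fps2_vf_def)

lemma fps2_vf_fps2_Y [simp]: "fps2_vf a b fps2_Y = b"
  by (simp add: fps2_vf_def fps2_Y_def fps_eq_iff)

lemma fps2_vf_pow_add: "(fps2_vf a b ^^ n) (F + G) = (fps2_vf a b ^^ n) F + (fps2_vf a b ^^ n) G"
  by (induct n) auto

lemma fps2_vf_pow_const: "n > 0 \<Longrightarrow> (fps2_vf a b ^^ n) (fps2_const c) = 0"
proof (induct n)
  case (Suc n)
  then show ?case by (cases n) auto
qed simp

lemma fps2_order_ge_vf:
  assumes "fps2_order_ge a 2" "fps2_order_ge b 2" "fps2_order_ge G m"
  shows "fps2_order_ge (fps2_vf a b G) (Suc m)"
proof -
  have "fps2_order_ge (a * fps_deriv G) (2 + (m - 1))" "fps2_order_ge (b * fps2_deriv_Y G) (2 + (m - 1))"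
    using fps2_order_ge_mult[OF assms(1) fps2_order_ge_deriv[OF assms(3)]]
      fps2_order_ge_mult[OF assms(2) fps2_order_ge_deriv_Y[OF assms(3)]] by auto
  then show ?thesis
    unfolding fps2_vf_def by (auto intro!: fps2_order_ge_add elim: fps2_order_ge_mono)
qed

lemma fps2_order_ge_vf_pow:
  "fps2_order_ge a 2 \<Longrightarrow> fps2_order_ge b 2 \<Longrightarrow> fps2_order_ge ((fps2_vf a b ^^ n) G) n"
  by (induct n) (auto intro: fps2_order_ge_vf)

definition fps2_vf_term :: "fps2 \<Rightarrow> fps2 \<Rightarrow> nat \<Rightarrow> fps2 \<Rightarrow> fps2" where
  "fps2_vf_term a b n G = fps2_const (inverse (fact n)) * (fps2_vf a b ^^ n) G"

definition fps2_exp_trunc :: "fps2 \<Rightarrow> fps2 \<Rightarrow> nat \<Rightarrow> fps2 \<Rightarrow> fps2" where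
  "fps2_exp_trunc a b N G = (\<Sum>n\<le>N. fps2_vf_term a b n G)"

definition fps2_exp :: "fps2 \<Rightarrow> fps2 \<Rightarrow> fps2 \<Rightarrow> fps2" where
  "fps2_exp a b G = fps2_of (vf_exp (ps2_of a) (ps2_of b) (ps2_of G))"

lemma vf_exp_ps2_of: "vf_exp (ps2_of a) (ps2_of b) (ps2_of G) = ps2_of (fps2_exp a b G)"
  by (simp add: fps2_exp_def)

lemma fps2_vf_term_Suc:
  "fps2_vf a b (fps2_vf_term a b n G) = fps2_const (of_nat (Suc n)) * fps2_vf_term a b (Suc n) G"
proof -
  have "fps2_const (of_nat (Suc n)) * fps2_const (inverse (fact (Suc n))) = fps2_const (inverse (fact n))"
    by (simp add: fps2_const_mult[symmetric] field_simps del: of_nat_Suc)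
  then show ?thesis
    by (simp add: fps2_vf_term_def mult.assoc[symmetric])
qed

lemma fps2_vf_term_0 [simp]: "fps2_vf_term a b 0 G = G"
  by (simp add: fps2_vf_term_def)

lemma fps2_order_ge_vf_term:
  "fps2_order_ge a 2 \<Longrightarrow> fps2_order_ge b 2 \<Longrightarrow> fps2_order_ge (fps2_vf_term a b n G) n"
  unfolding fps2_vf_term_def by (intro fps2_order_ge_const_mult fps2_order_ge_vf_pow)

lemma fps2_vf_term_mult:
  "fps2_vf_term a b n (F * G) = (\<Sum>k\<le>n. fps2_vf_term a b k F * fps2_vf_term a b (n - k) G)"
proof (induct n)
  case 0
  then show ?case by simp
next
  case (Suc n)
  let ?W = "fps2_vf_term a b" and ?C = "\<lambda>k. fps2_const (of_nat k)"
  let ?t = "\<lambda>k. ?W k F * ?W (Suc n - k) G"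
  have split: "?C (Suc n - k) * t + ?C k * t = ?C (Suc n) * t" if "k \<le> Suc n" for k and t :: fps2
    using that by (simp add: distrib_right[symmetric] fps2_const_add[symmetric] of_nat_add[symmetric]
        del: of_nat_add of_nat_Suc)
  have "?C (Suc n) * ?W (Suc n) (F * G) = fps2_vf a b (\<Sum>k\<le>n. ?W k F * ?W (n - k) G)"
    by (simp only: fps2_vf_term_Suc[symmetric] Suc.hyps)
  also have "\<dots> =
      (\<Sum>k\<le>n. ?C (Suc n - k) * ?t k) + (\<Sum>k\<le>n. ?C (Suc k) * (?W (Suc k) F * ?W (n - k) G))"
    by (simp add: fps2_vf_sum fps2_vf_mult fps2_vf_term_Suc sum.distrib Suc_diff_le algebra_simps)
  also have "(\<Sum>k\<le>n. ?C (Suc n - k) * ?t k) = (\<Sum>k\<le>Suc n. ?C (Suc n - k) * ?t k)"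
    by simp
  also have "(\<Sum>k\<le>n. ?C (Suc k) * (?W (Suc k) F * ?W (n - k) G)) = (\<Sum>k\<le>Suc n. ?C k * ?t k)"
    by (subst sum.atMost_Suc_shift) (simp del: of_nat_Suc)
  also have "(\<Sum>k\<le>Suc n. ?C (Suc n - k) * ?t k) + (\<Sum>k\<le>Suc n. ?C k * ?t k) =
      (\<Sum>k\<le>Suc n. ?C (Suc n) * ?t k)"
    unfolding sum.distrib[symmetric] by (intro sum.cong refl split) simp
  also have "\<dots> = ?C (Suc n) * (\<Sum>k\<le>Suc n. ?t k)"
    by (simp only: sum_distrib_left)
  finally show ?case
    by (simp add: fps2_const_def del: of_nat_Suc)
qed

lemma fps2_exp_nth:
  "fps2_exp a b G $ i $ j = (\<Sum>k\<le>i + j. (fps2_vf a b ^^ k) G $ i $ j / fact k)"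
  unfolding fps2_exp_def vf_exp_def vf_apply_pow_ps2_of by (simp add: ps2_of_def)

lemma fps2_order_ge_exp_minus_trunc:
  assumes a: "fps2_order_ge a 2" and b: "fps2_order_ge b 2"
  shows "fps2_order_ge (fps2_exp a b G - fps2_exp_trunc a b N G) (Suc N)"
  unfolding fps2_order_ge_def
proof (intro allI impI)
  fix i j assume ij: "i + j < Suc N"
  have "fps2_exp a b G $ i $ j = (\<Sum>k\<le>N. (fps2_vf a b ^^ k) G $ i $ j / fact k)"
    unfolding fps2_exp_nth
  proof (rule sum.mono_neutral_left)
    show "\<forall>k\<in>{..N} - {..i + j}. (fps2_vf a b ^^ k) G $ i $ j / fact k = 0"
      using fps2_order_ge_vf_pow[OF a b] unfolding fps2_order_ge_def by auto
  qed (use ij in auto)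
  also have "\<dots> = fps2_exp_trunc a b N G $ i $ j"
    by (simp add: fps2_exp_trunc_def fps2_vf_term_def fps2_sum_nth divide_inverse mult.commute)
  finally show "(fps2_exp a b G - fps2_exp_trunc a b N G) $ i $ j = 0"
    by simp
qed

lemma fps2_exp_eqI:
  assumes a: "fps2_order_ge a 2" and b: "fps2_order_ge b 2"
    and H: "\<And>N. fps2_order_ge (H - fps2_exp_trunc a b N G) (Suc N)"
  shows "fps2_exp a b G = H"
proof (rule fps2_eqI_order_ge)
  fix N
  have "fps2_order_ge (fps2_exp a b G - H) (Suc N)"
    using fps2_order_ge_exp_minus_trunc[OF a b] H
    by (blast intro: fps2_order_ge_diff_trans fps2_order_ge_diff_commute[THEN iffD1])
  then show "fps2_order_ge (fps2_exp a b G - H) N"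
    by (rule fps2_order_ge_mono) simp
qed

lemma fps2_order_ge_exp_trunc_mult:
  assumes a: "fps2_order_ge a 2" and b: "fps2_order_ge b 2"
  shows "fps2_order_ge (fps2_exp_trunc a b N F * fps2_exp_trunc a b N G - fps2_exp_trunc a b N (F * G)) (Suc N)"
proof -
  let ?t = "\<lambda>k m. fps2_vf_term a b k F * fps2_vf_term a b m G"
  let ?B = "{..N} \<times> {..N}" and ?T = "{(k, m). k + m \<le> N}"
  have "fps2_exp_trunc a b N F * fps2_exp_trunc a b N G = (\<Sum>(k,m)\<in>?B. ?t k m)"
    by (simp add: fps2_exp_trunc_def sum_product sum.cartesian_product)
  also have "\<dots> = (\<Sum>(k,m)\<in>?B - ?T. ?t k m) + (\<Sum>(k,m)\<in>?T. ?t k m)"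
    by (rule sum.subset_diff) auto
  also have "(\<Sum>(k,m)\<in>?T. ?t k m) = fps2_exp_trunc a b N (F * G)"
    by (simp add: fps2_exp_trunc_def fps2_vf_term_mult sum.triangle_reindex_eq)
  finally have eq: "fps2_exp_trunc a b N F * fps2_exp_trunc a b N G - fps2_exp_trunc a b N (F * G) =
      (\<Sum>(k,m)\<in>?B - ?T. ?t k m)"
    by simp
  show ?thesis
    unfolding eq
  proof (rule fps2_order_ge_sum)
    fix x assume "x \<in> ?B - ?T"
    then obtain k m where x: "x = (k, m)" "Suc N \<le> k + m" by auto
    have "fps2_order_ge (?t k m) (k + m)"
      by (intro fps2_order_ge_mult fps2_order_ge_vf_term a b)
    then show "fps2_order_ge (case x of (k, m) \<Rightarrow> ?t k m) (Suc N)"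
      using x by (auto elim: fps2_order_ge_mono)
  qed
qed

lemma fps2_exp_mult:
  assumes a: "fps2_order_ge a 2" and b: "fps2_order_ge b 2"
  shows "fps2_exp a b (F * G) = fps2_exp a b F * fps2_exp a b G"
proof (rule fps2_exp_eqI[OF a b])
  fix N
  have "fps2_order_ge (fps2_exp a b F * fps2_exp a b G - fps2_exp_trunc a b N F * fps2_exp_trunc a b N G) (Suc N)"
    by (intro fps2_order_ge_mult_cong fps2_order_ge_exp_minus_trunc a b)
  then show "fps2_order_ge (fps2_exp a b F * fps2_exp a b G - fps2_exp_trunc a b N (F * G)) (Suc N)"
    using fps2_order_ge_exp_trunc_mult[OF a b] fps2_order_ge_diff_trans by blast
qed

lemma fps2_exp_add:
  assumes a: "fps2_order_ge a 2" and b: "fps2_order_ge b 2"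
  shows "fps2_exp a b (F + G) = fps2_exp a b F + fps2_exp a b G"
proof (rule fps2_exp_eqI[OF a b])
  fix N
  have "fps2_exp_trunc a b N (F + G) = fps2_exp_trunc a b N F + fps2_exp_trunc a b N G"
    by (simp add: fps2_exp_trunc_def fps2_vf_term_def fps2_vf_pow_add distrib_left sum.distrib)
  then show "fps2_order_ge (fps2_exp a b F + fps2_exp a b G - fps2_exp_trunc a b N (F + G)) (Suc N)"
    using fps2_order_ge_add[OF fps2_order_ge_exp_minus_trunc[OF a b, of F N]
        fps2_order_ge_exp_minus_trunc[OF a b, of G N]]
    by (simp add: algebra_simps)
qed

lemma fps2_exp_const:
  assumes a: "fps2_order_ge a 2" and b: "fps2_order_ge b 2"
  shows "fps2_exp a b (fps2_const c) = fps2_const c"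
proof (rule fps2_exp_eqI[OF a b])
  fix N
  have "fps2_exp_trunc a b N (fps2_const c) = (\<Sum>n\<in>{0}. fps2_vf_term a b n (fps2_const c))"
    unfolding fps2_exp_trunc_def
    by (rule sum.mono_neutral_right) (auto simp: fps2_vf_term_def fps2_vf_pow_const)
  then show "fps2_order_ge (fps2_const c - fps2_exp_trunc a b N (fps2_const c)) (Suc N)"
    by (simp add: fps2_order_ge_def)
qed

lemma fps2_order_ge_exp_minus_linear:
  assumes a: "fps2_order_ge a 2" and b: "fps2_order_ge b 2" and G: "fps2_order_ge G 1"
  shows "fps2_order_ge (fps2_exp a b G - (G + fps2_vf a b G)) 3"
proof -
  have "fps2_order_ge (fps2_vf_term a b 2 G) 3"
    unfolding fps2_vf_term_def
    using fps2_order_ge_vf[OF a b fps2_order_ge_vf[OF a b G]]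
    by (intro fps2_order_ge_const_mult) (simp add: numeral_3_eq_3 numeral_2_eq_2)
  moreover have "fps2_exp_trunc a b 2 G = G + fps2_vf a b G + fps2_vf_term a b 2 G"
    by (simp add: fps2_exp_trunc_def numeral_2_eq_2 fps2_vf_term_def)
  ultimately show ?thesis
    using fps2_order_ge_add[OF fps2_order_ge_exp_minus_trunc[OF a b, of G 2]]
    by (fastforce simp: numeral_3_eq_3 numeral_2_eq_2 algebra_simps)
qed

section \<open>Pullback by a blow-up chart\<close>

text \<open>In the chart \<pi>(u, w) = (u, u (c + w)) the outer variable is u and the inner one w,
  so that G \<circ> \<pi> = \<Sum>_k u^k \<Sum>_(n \<le> k) G_(k-n,n) (c + w)^n.\<close>

definition chart_line :: "complex \<Rightarrow> complex fps" where
  "chart_line c = fps_const c + fps_X"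

definition chart_pullback :: "complex \<Rightarrow> fps2 \<Rightarrow> fps2" where
  "chart_pullback c G = Abs_fps (\<lambda>k. \<Sum>n\<le>k. fps_const (G $ (k - n) $ n) * chart_line c ^ n)"

lemma chart_pullback_nth:
  "chart_pullback c G $ k = (\<Sum>n\<le>k. fps_const (G $ (k - n) $ n) * chart_line c ^ n)"
  by (simp add: chart_pullback_def)

lemma chart_line_nth_0 [simp]: "chart_line c $ 0 = c"
  by (simp add: chart_line_def)

lemma chart_line_power_nth: "(chart_line c ^ n) $ l = of_nat (n choose l) * c ^ (n - l)"
proof -
  have "chart_line c ^ n = (\<Sum>k\<le>n. of_nat (n choose k) * fps_X ^ k * fps_const c ^ (n - k))"
    unfolding chart_line_def by (subst add.commute) (rule binomial_ring)
  also have "\<dots> $ l = (\<Sum>k\<le>n. if k = l then of_nat (n choose k) * c ^ (n - k) else 0)"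
    unfolding fps_sum_nth
    by (intro sum.cong refl)
       (simp add: fps_of_nat[symmetric] fps_const_power mult.assoc fps_X_power_mult_nth)
  finally show ?thesis
    by (simp add: sum.delta)
qed

lemma pull1_ps2_of: "pull1 c (ps2_of G) = ps2_of (chart_pullback c G)"
  by (simp add: pull1_def ps2_of_def fun_eq_iff chart_pullback_nth fps_sum_nth
      chart_line_power_nth mult.assoc)

lemma fps_const_chart_line: "fps_const (chart_line c) = fps2_const c + fps2_Y"
  by (simp add: chart_line_def fps2_const_def fps2_Y_def)

lemma chart_pullback_add: "chart_pullback c (F + G) = chart_pullback c F + chart_pullback c G"
  by (rule fps_ext)
    (simp add: chart_pullback_nth sum.distrib distrib_right fps_const_add[symmetric] del: fps_const_add)

lemma chart_pullback_diff: "chart_pullback c (F - G) = chart_pullback c F - chart_pullback c G"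
  by (simp add: fps_eq_iff chart_pullback_nth sum_subtractf left_diff_distrib
      fps_const_sub[symmetric] del: fps_const_sub)

lemma fps_const_sum: "fps_const (sum f S) = (\<Sum>x\<in>S. fps_const (f x))"
  by (induct S rule: infinite_finite_induct) (auto simp: fps_const_add[symmetric] simp del: fps_const_add)

lemma chart_pullback_mult: "chart_pullback c (F * G) = chart_pullback c F * chart_pullback c G"
proof (rule fps_ext)
  fix k :: nat
  let ?L = "chart_line c"
  let ?S1 = "SIGMA n:{..k}. {..k-n} \<times> {..n}"
  let ?S2 = "SIGMA d:{..k}. {..d} \<times> {..k-d}"
  have sum3: "(\<Sum>n\<in>A. \<Sum>i\<in>B n. \<Sum>j\<in>C n. f n i j) =
      (\<Sum>(n,i,j)\<in>(SIGMA n:A. B n \<times> C n). f n i j)"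
    if "finite A" "\<And>n. finite (B n)" "\<And>n. finite (C n)"
    for A and B C :: "nat \<Rightarrow> nat set" and f :: "nat \<Rightarrow> nat \<Rightarrow> nat \<Rightarrow> complex fps"
    using that by (simp add: sum.cartesian_product sum.Sigma)
  have "chart_pullback c (F * G) $ k =
      (\<Sum>(n,i,j)\<in>?S1. fps_const (F$i$j * G$(k-n-i)$(n-j)) * ?L ^ n)"
    by (simp add: chart_pullback_nth fps2_mult_nth fps_const_sum sum_distrib_right sum3)
  also have "\<dots> = (\<Sum>(d,n1,n2)\<in>?S2. fps_const (F$(d-n1)$n1 * G$(k-d-n2)$n2) * ?L ^ (n1 + n2))"
    by (rule sum.reindex_bij_witness[where i="\<lambda>(d,n1,n2). (n1+n2, d-n1, n1)"
          and j="\<lambda>(n,i,j). (i+j, j, n-j)"])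
       (auto simp: diff_diff_add add.commute)
  also have "\<dots> = (chart_pullback c F * chart_pullback c G) $ k"
    by (simp add: fps_mult_nth atLeast0AtMost chart_pullback_nth sum_product sum3 power_add mult_ac)
  finally show "chart_pullback c (F * G) $ k = (chart_pullback c F * chart_pullback c G) $ k" .
qed

lemma chart_pullback_const: "chart_pullback c (fps2_const s) = fps2_const s"
proof (rule fps_ext)
  fix k
  have "chart_pullback c (fps2_const s) $ k =
      (\<Sum>n\<in>{0}. fps_const (fps2_const s $ (k - n) $ n) * chart_line c ^ n)"
    unfolding chart_pullback_nth by (rule sum.mono_neutral_right) auto
  then show "chart_pullback c (fps2_const s) $ k = fps2_const s $ k"
    by (simp add: fps2_const_def)
qed

lemma chart_pullback_zero [simp]: "chart_pullback c 0 = 0"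
  using chart_pullback_const[of c 0] by simp

lemma chart_pullback_sum: "chart_pullback c (sum f S) = (\<Sum>x\<in>S. chart_pullback c (f x))"
  by (induct S rule: infinite_finite_induct) (auto simp: chart_pullback_add)

lemma chart_pullback_fps_X: "chart_pullback c fps_X = fps_X"
proof (rule fps_ext)
  fix k
  have "chart_pullback c fps_X $ k = (\<Sum>n\<in>{0}. fps_const ((fps_X::fps2) $ (k - n) $ n) * chart_line c ^ n)"
    unfolding chart_pullback_nth by (rule sum.mono_neutral_right) (auto simp: fps_X_def)
  then show "chart_pullback c fps_X $ k = fps_X $ k"
    by (simp add: fps_X_def)
qed

lemma chart_pullback_fps2_Y: "chart_pullback c fps2_Y = fps_X * (fps2_const c + fps2_Y)"
proof (rule fps_ext)
  fix k
  show "chart_pullback c fps2_Y $ k = (fps_X * (fps2_const c + fps2_Y)) $ k"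
  proof (cases "k = 1")
    case True
    then show ?thesis
      by (simp add: chart_pullback_nth fps_const_chart_line[symmetric])
  next
    case False
    then have "(\<Sum>n\<le>k. fps_const (fps2_Y $ (k - n) $ n) * chart_line c ^ n) = 0"
      by (intro sum.neutral) auto
    with False show ?thesis
      by (simp add: chart_pullback_nth fps_const_chart_line[symmetric])
  qed
qed

lemma chart_pullback_nth_0: "G $ 0 $ 0 = 0 \<Longrightarrow> chart_pullback c G $ 0 = 0"
  by (simp add: chart_pullback_nth)

lemma chart_pullback_nth_1: "fps2_order_ge G 2 \<Longrightarrow> chart_pullback c G $ 1 = 0"
  by (simp add: chart_pullback_nth fps2_order_ge_def)

lemma chart_pullback_nth_2_0: "chart_pullback c G $ 2 $ 0 = homog_eval (ps2_of G) 2 1 c"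
  by (simp add: chart_pullback_nth fps_sum_nth chart_line_power_nth homog_eval_def ps2_of_def
      numeral_2_eq_2 mult_ac)

lemma fps2_order_ge_chart_pullback: "fps2_order_ge G m \<Longrightarrow> fps2_order_ge (chart_pullback c G) m"
  unfolding fps2_order_ge_def chart_pullback_nth fps_sum_nth
  by (auto intro!: sum.neutral)

lemma chart_pullback_deriv_Y: "fps2_deriv_Y (chart_pullback c G) = fps_X * chart_pullback c (fps2_deriv_Y G)"
proof (rule fps_ext)
  fix k
  have lhs: "fps2_deriv_Y (chart_pullback c G) $ k =
      (\<Sum>n\<le>k. fps_const (G $ (k - n) $ n) * (of_nat n * chart_line c ^ (n - 1)))"
    by (simp add: fps2_deriv_Y_def chart_pullback_nth fps_deriv_sum fps_deriv_power' chart_line_def)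
  show "fps2_deriv_Y (chart_pullback c G) $ k = (fps_X * chart_pullback c (fps2_deriv_Y G)) $ k"
  proof (cases k)
    case 0
    then show ?thesis using lhs by simp
  next
    case (Suc k')
    have "fps2_deriv_Y (chart_pullback c G) $ k =
        (\<Sum>n\<le>k'. fps_const (G $ (k' - n) $ Suc n) * (of_nat (Suc n) * chart_line c ^ n))"
      unfolding Suc lhs[unfolded Suc] by (subst sum.atMost_Suc_shift) simp
    also have "\<dots> = (fps_X * chart_pullback c (fps2_deriv_Y G)) $ k"
      by (simp add: Suc chart_pullback_nth fps_of_nat[symmetric] fps_const_mult[symmetric] mult_ac
          del: of_nat_Suc fps_const_mult)
    finally show ?thesis .
  qed
qed

lemma chart_pullback_deriv:
  "fps_deriv (chart_pullback c G) =
     chart_pullback c (fps_deriv G) + fps_const (chart_line c) * chart_pullback c (fps2_deriv_Y G)"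
proof (rule fps_ext)
  fix k
  let ?g = "\<lambda>n. G $ (Suc k - n) $ n" and ?L = "chart_line c"
  have "chart_pullback c (fps_deriv G) $ k = (\<Sum>n\<le>k. fps_const (of_nat (Suc k - n) * ?g n) * ?L ^ n)"
    unfolding chart_pullback_nth fps2_deriv_nth by (intro sum.cong refl) (simp add: Suc_diff_le)
  then have A: "chart_pullback c (fps_deriv G) $ k =
      (\<Sum>n\<le>Suc k. fps_const (of_nat (Suc k - n) * ?g n) * ?L ^ n)"
    by simp
  have "(fps_const ?L * chart_pullback c (fps2_deriv_Y G)) $ k =
      (\<Sum>n\<le>k. fps_const (of_nat (Suc n) * ?g (Suc n)) * ?L ^ Suc n)"
    unfolding fps_mult_left_const_nth chart_pullback_nth sum_distrib_left
    by (intro sum.cong refl) (simp add: mult_ac)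
  then have B: "(fps_const ?L * chart_pullback c (fps2_deriv_Y G)) $ k =
      (\<Sum>n\<le>Suc k. fps_const (of_nat n * ?g n) * ?L ^ n)"
    by (subst sum.atMost_Suc_shift) simp
  have "fps_deriv (chart_pullback c G) $ k = (\<Sum>n\<le>Suc k. fps_const (of_nat (Suc k) * ?g n) * ?L ^ n)"
    unfolding fps_deriv_nth chart_pullback_nth fps_of_nat[symmetric] sum_distrib_left Suc_eq_plus1[symmetric]
    by (intro sum.cong refl) (simp add: fps_const_mult[symmetric] mult_ac del: fps_const_mult of_nat_Suc)
  also have "\<dots> = chart_pullback c (fps_deriv G) $ k + (fps_const ?L * chart_pullback c (fps2_deriv_Y G)) $ k"
    unfolding A B sum.distrib[symmetric]
  proof (intro sum.cong refl)
    fix n assume "n \<in> {..Suc k}"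
    then have "of_nat (Suc k) = (of_nat (Suc k - n) + of_nat n :: complex)"
      by (simp add: of_nat_diff)
    then show "fps_const (of_nat (Suc k) * ?g n) * ?L ^ n =
        fps_const (of_nat (Suc k - n) * ?g n) * ?L ^ n + fps_const (of_nat n * ?g n) * ?L ^ n"
      by (simp add: distrib_right[symmetric] fps_const_add[symmetric] del: fps_const_add of_nat_Suc)
  qed
  finally show "fps_deriv (chart_pullback c G) $ k =
      (chart_pullback c (fps_deriv G) + fps_const ?L * chart_pullback c (fps2_deriv_Y G)) $ k"
    by simp
qed

text \<open>D\<pi> \<cdot> X~ = X \<circ> \<pi> says that the u-component of X~ is a \<circ> \<pi> and that u times its
  w-component is b \<circ> \<pi> - (c + w) (a \<circ> \<pi>).\<close>

definition lifted_vf_w :: "complex \<Rightarrow> fps2 \<Rightarrow> fps2 \<Rightarrow> fps2" where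
  "lifted_vf_w c a b = fps_shift 1 (chart_pullback c b - fps_const (chart_line c) * chart_pullback c a)"

lemma fps_X_mult_fps_shift_1:
  fixes H :: "'a::comm_ring_1 fps"
  shows "H $ 0 = 0 \<Longrightarrow> fps_X * fps_shift 1 H = H"
proof (rule fps_ext)
  fix n
  show "H $ 0 = 0 \<Longrightarrow> (fps_X * fps_shift 1 H) $ n = H $ n"
    by (cases n) auto
qed

lemma fps2_vf_lifted_chart_pullback:
  assumes "a $ 0 $ 0 = 0" "b $ 0 $ 0 = 0"
  shows "fps2_vf (chart_pullback c a) (lifted_vf_w c a b) (chart_pullback c G) =
           chart_pullback c (fps2_vf a b G)"
proof -
  let ?H = "chart_pullback c b - fps_const (chart_line c) * chart_pullback c a"
  have H: "fps_X * lifted_vf_w c a b = ?H"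
    unfolding lifted_vf_w_def using assms by (intro fps_X_mult_fps_shift_1) (simp add: chart_pullback_nth_0)
  have "fps2_vf (chart_pullback c a) (lifted_vf_w c a b) (chart_pullback c G) =
      chart_pullback c a * chart_pullback c (fps_deriv G) +
      (fps_const (chart_line c) * chart_pullback c a + fps_X * lifted_vf_w c a b) *
        chart_pullback c (fps2_deriv_Y G)"
    by (simp add: fps2_vf_def chart_pullback_deriv chart_pullback_deriv_Y algebra_simps)
  also have "\<dots> = chart_pullback c (fps2_vf a b G)"
    unfolding H by (simp add: fps2_vf_def chart_pullback_add chart_pullback_mult)
  finally show ?thesis .
qed

lemma funpow_fps2_vf_lifted_chart_pullback:
  assumes "a $ 0 $ 0 = 0" "b $ 0 $ 0 = 0"
  shows "(fps2_vf (chart_pullback c a) (lifted_vf_w c a b) ^^ n) (chart_pullback c G) =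
           chart_pullback c ((fps2_vf a b ^^ n) G)"
  by (induct n) (simp_all add: fps2_vf_lifted_chart_pullback[OF assms])

lemma fps2_exp_lifted_chart_pullback:
  assumes a: "fps2_order_ge a 2" and b: "fps2_order_ge b 2"
    and w: "fps2_order_ge (lifted_vf_w c a b) 2"
  shows "fps2_exp (chart_pullback c a) (lifted_vf_w c a b) (chart_pullback c G) =
           chart_pullback c (fps2_exp a b G)"
proof (rule fps2_exp_eqI[OF fps2_order_ge_chart_pullback[OF a] w])
  have 0: "a $ 0 $ 0 = 0" "b $ 0 $ 0 = 0"
    using a b by (auto simp: fps2_order_ge_def)
  fix N
  have trunc: "fps2_exp_trunc (chart_pullback c a) (lifted_vf_w c a b) N (chart_pullback c G) =
      chart_pullback c (fps2_exp_trunc a b N G)"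
    unfolding fps2_exp_trunc_def fps2_vf_term_def chart_pullback_sum chart_pullback_mult
      chart_pullback_const funpow_fps2_vf_lifted_chart_pullback[OF 0] ..
  show "fps2_order_ge (chart_pullback c (fps2_exp a b G) -
      fps2_exp_trunc (chart_pullback c a) (lifted_vf_w c a b) N (chart_pullback c G)) (Suc N)"
    unfolding trunc chart_pullback_diff[symmetric]
    by (intro fps2_order_ge_chart_pullback fps2_order_ge_exp_minus_trunc a b)
qed

text \<open>u times the w-component of X~ vanishes to order 2 except for its coefficient of u^2 w^0,
  which is b_2(1, c) - c a_2(1, c): it vanishes iff [1 : c] is an eigendirection of the quadratic
  part of X.\<close>

lemma fps2_order_ge_lifted_vf_w:
  assumes a: "fps2_order_ge a 2" and b: "fps2_order_ge b 2"
    and char: "homog_eval (ps2_of b) 2 1 c = c * homog_eval (ps2_of a) 2 1 c"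
  shows "fps2_order_ge (lifted_vf_w c a b) 2"
proof -
  define H where "H = chart_pullback c b - fps_const (chart_line c) * chart_pullback c a"
  have H1: "H $ 1 = 0"
    unfolding H_def using chart_pullback_nth_1[OF a] chart_pullback_nth_1[OF b] by simp
  have H20: "H $ 2 $ 0 = 0"
    unfolding H_def using char by (simp add: chart_pullback_nth_2_0)
  have "fps_shift 1 H $ i $ j = 0" if "i + j < 2" for i j
  proof -
    from that consider "i = 0" | "i = 1" "j = 0" by linarith
    then show ?thesis
      using H1 H20 by cases (simp_all add: numeral_2_eq_2)
  qed
  then show ?thesis
    unfolding fps2_order_ge_def lifted_vf_w_def H_def[symmetric] by blast
qed

section \<open>The chart at [1 : c]\<close>

lemma homog_eval_eq_0: "homog_zero f k \<Longrightarrow> homog_eval f k v1 v2 = 0"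
  by (simp add: homog_zero_def homog_eval_def)

lemma char_direction_quadratic_part:
  assumes p: "ps_order_ge p 2" and q: "ps_order_ge q 2" and char: "char_direction p q 1 c"
  shows "homog_eval q 2 1 c = c * homog_eval p 2 1 c"
proof -
  obtain k lam where nz: "\<not> (homog_zero p k \<and> homog_zero q k)"
    and low: "\<forall>m<k. homog_zero p m \<and> homog_zero q m"
    and ev: "homog_eval p k 1 c = lam * 1" "homog_eval q k 1 c = lam * c"
    using char unfolding char_direction_def by blast
  have "\<not> k < 2"
  proof
    assume "k < 2"
    then have "homog_zero p k \<and> homog_zero q k"
      using p q unfolding homog_zero_def ps_order_ge_def by auto
    with nz show False by blast
  qed
  then consider "k = 2" | "2 < k" by linarith
  then show ?thesis
  proof cases
    case 1
    with ev show ?thesis by simp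
  next
    case 2
    with low show ?thesis by (simp add: homog_eval_eq_0)
  qed
qed

lemma homog_eval_2_eq_if_order_ge_diff:
  assumes "fps2_order_ge (F - G) 3"
  shows "homog_eval (ps2_of F) 2 v1 v2 = homog_eval (ps2_of G) 2 v1 v2"
  unfolding homog_eval_def ps2_of_def
  by (intro sum.cong refl) (simp add: fps2_nth_eq_if_order_ge_diff[OF assms])

lemma homog_eval_2_exp_eq_vf:
  assumes a: "fps2_order_ge a 2" and b: "fps2_order_ge b 2" and G: "fps2_order_ge G 1"
    and exp: "fps2_exp a b G = G + P"
  shows "homog_eval (ps2_of P) 2 v1 v2 = homog_eval (ps2_of (fps2_vf a b G)) 2 v1 v2"
  using fps2_order_ge_exp_minus_linear[OF a b G] unfolding exp
  by (intro homog_eval_2_eq_if_order_ge_diff) (simp add: algebra_simps)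

lemma fps2_exp_lifted_coordinates:
  fixes a b P Q :: fps2
  assumes a: "fps2_order_ge a 2" and b: "fps2_order_ge b 2"
    and w: "fps2_order_ge (lifted_vf_w c a b) 2"
    and P: "fps2_order_ge P 2" and Q: "Q $ 0 $ 0 = 0"
    and eX: "fps2_exp a b fps_X = fps_X + P" and eY: "fps2_exp a b fps2_Y = fps2_Y + Q"
  defines "E \<equiv> fps2_exp (chart_pullback c a) (lifted_vf_w c a b)"
  shows "E fps_X = fps_X + chart_pullback c P"
    and "fps_shift 1 (chart_pullback c (fps_X + P)) * (E fps2_Y + fps2_const c) =
           fps_shift 1 (chart_pullback c (fps2_Y + Q))"
proof -
  note a' = fps2_order_ge_chart_pullback[OF a]
  note pullback = fps2_exp_lifted_chart_pullback[OF a b w, folded E_def]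
  show EX: "E fps_X = fps_X + chart_pullback c P"
    using pullback[of fps_X] by (simp add: chart_pullback_fps_X eX chart_pullback_add)
  have "E fps_X * (fps2_const c + E fps2_Y) = chart_pullback c (fps2_Y + Q)"
    using pullback[of fps2_Y]
    by (simp add: E_def chart_pullback_fps2_Y eY fps2_exp_mult[OF a' w] fps2_exp_add[OF a' w]
        fps2_exp_const[OF a' w])
  moreover have "fps_X * fps_shift 1 (chart_pullback c (fps_X + P)) = fps_X + chart_pullback c P"
    using P by (subst fps_X_mult_fps_shift_1)
      (simp_all add: chart_pullback_nth_0 chart_pullback_add chart_pullback_fps_X fps2_order_ge_def)
  moreover have "fps_X * fps_shift 1 (chart_pullback c (fps2_Y + Q)) = chart_pullback c (fps2_Y + Q)"
    using Q by (intro fps_X_mult_fps_shift_1 chart_pullback_nth_0) simp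
  ultimately have "fps_X * (fps_shift 1 (chart_pullback c (fps_X + P)) * (E fps2_Y + fps2_const c)) =
      fps_X * fps_shift 1 (chart_pullback c (fps2_Y + Q))"
    by (simp add: EX mult.assoc[symmetric] add.commute)
  then show "fps_shift 1 (chart_pullback c (fps_X + P)) * (E fps2_Y + fps2_const c) =
      fps_shift 1 (chart_pullback c (fps2_Y + Q))"
    by simp
qed

lemma fps_shift_chart_pullback_X_plus_nth_0_0:
  assumes "fps2_order_ge P 2"
  shows "fps_shift 1 (chart_pullback c (fps_X + P)) $ 0 $ 0 = 1"
proof -
  have "P $ 1 $ 0 = 0" "P $ 0 $ 1 = 0"
    using assms by (auto simp: fps2_order_ge_def)
  then show ?thesis
    by (simp add: chart_pullback_nth fps_sum_nth chart_line_power_nth fps_X_def)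
qed

lemma vf_exp_lift1_X_eq_lift1_F:
  fixes p q a b :: ps2
  assumes p: "ps_order_ge p 2" and q: "ps_order_ge q 2"
    and a: "ps_order_ge a 2" and b: "ps_order_ge b 2"
    and ex: "vf_exp a b ps_X = ps_add ps_X p" and ey: "vf_exp a b ps_Y = ps_add ps_Y q"
    and char: "char_direction p q 1 c"
  shows "vf_exp (fst (lift1_X c a b)) (snd (lift1_X c a b)) ps_X = fst (lift1_F c p q) \<and>
         vf_exp (fst (lift1_X c a b)) (snd (lift1_X c a b)) ps_Y = snd (lift1_F c p q)"
proof -
  define A B P Q where "A = fps2_of a" "B = fps2_of b" "P = fps2_of p" "Q = fps2_of q"
  then have abpq: "a = ps2_of A" "b = ps2_of B" "p = ps2_of P" "q = ps2_of Q"
    by simp_all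
  have oA: "fps2_order_ge A 2" and oB: "fps2_order_ge B 2"
    and oP: "fps2_order_ge P 2" and oQ: "fps2_order_ge Q 2"
    using a b p q by (simp_all add: abpq ps_order_ge_ps2_of)
  have eX: "fps2_exp A B fps_X = fps_X + P"
    using ex by (simp add: abpq ps_X_eq_ps2_of vf_exp_ps2_of ps_add_ps2_of ps2_of_inject)
  have eY: "fps2_exp A B fps2_Y = fps2_Y + Q"
    using ey by (simp add: abpq ps_Y_eq_ps2_of vf_exp_ps2_of ps_add_ps2_of ps2_of_inject)
  have order_1: "fps2_order_ge fps_X 1" "fps2_order_ge fps2_Y 1"
    by (auto simp: fps2_order_ge_def fps_X_def)
  have "homog_eval (ps2_of B) 2 1 c = c * homog_eval (ps2_of A) 2 1 c"
    using char_direction_quadratic_part[OF p q char]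
      homog_eval_2_exp_eq_vf[OF oA oB order_1(1) eX] homog_eval_2_exp_eq_vf[OF oA oB order_1(2) eY]
    by (simp add: abpq)
  then have w: "fps2_order_ge (lifted_vf_w c A B) 2"
    by (rule fps2_order_ge_lifted_vf_w[OF oA oB])
  define E where "E = fps2_exp (chart_pullback c A) (lifted_vf_w c A B)"
  have Q0: "Q $ 0 $ 0 = 0"
    using oQ by (simp add: fps2_order_ge_def)
  note lifted = fps2_exp_lifted_coordinates[OF oA oB w oP Q0 eX eY, folded E_def]
  have "lift1_X c a b = (ps2_of (chart_pullback c A), ps2_of (lifted_vf_w c A B))"
    by (simp add: lift1_X_def abpq pull1_ps2_of ps_const_eq_ps2_of ps_Y_eq_ps2_of ps_add_ps2_of
        ps_mult_ps2_of ps_sub_ps2_of ps_divX_ps2_of fps_const_chart_line[symmetric] lifted_vf_w_def)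
  moreover have "fst (lift1_F c p q) = ps2_of (E fps_X)"
    by (simp add: lift1_F_def abpq pull1_ps2_of ps_X_eq_ps2_of ps_add_ps2_of lifted(1))
  moreover have "snd (lift1_F c p q) = ps2_of (E fps2_Y)"
  proof -
    have "fps_shift 1 (chart_pullback c (fps_X + P)) \<noteq> 0"
    proof
      assume "fps_shift 1 (chart_pullback c (fps_X + P)) = 0"
      with fps_shift_chart_pullback_X_plus_nth_0_0[OF oP, of c] show False
        by (simp only:) simp
    qed
    then have div: "ps_div (ps2_of (fps_shift 1 (chart_pullback c (fps2_Y + Q))))
        (ps2_of (fps_shift 1 (chart_pullback c (fps_X + P)))) = ps2_of (E fps2_Y + fps2_const c)"
      by (intro ps_div_ps2_of lifted(2))
    show ?thesis
      unfolding lift1_F_def snd_conv abpq ps_X_eq_ps2_of ps_Y_eq_ps2_of ps_add_ps2_of pull1_ps2_of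
        ps_divX_ps2_of ps_const_eq_ps2_of div ps_sub_ps2_of
      by simp
  qed
  ultimately show ?thesis
    by (simp add: ps_X_eq_ps2_of ps_Y_eq_ps2_of vf_exp_ps2_of E_def)
qed

section \<open>The chart at [0 : 1]\<close>

definition ps2_swap :: "ps2 \<Rightarrow> ps2" where
  "ps2_swap f = (\<lambda>i j. f j i)"

lemma ps2_swap_mult: "ps2_swap (ps_mult f g) = ps_mult (ps2_swap f) (ps2_swap g)"
  unfolding ps2_swap_def ps_mult_def fun_eq_iff by (auto intro: sum.swap)

lemma ps2_swap_add: "ps2_swap (ps_add f g) = ps_add (ps2_swap f) (ps2_swap g)"
  by (simp add: ps2_swap_def ps_add_def)

lemma ps2_swap_X: "ps2_swap ps_X = ps_Y"
  by (auto simp: ps2_swap_def ps_X_def ps_Y_def fun_eq_iff)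

lemma ps2_swap_Y: "ps2_swap ps_Y = ps_X"
  by (auto simp: ps2_swap_def ps_X_def ps_Y_def fun_eq_iff)

lemma ps_order_ge_ps2_swap: "ps_order_ge (ps2_swap f) m = ps_order_ge f m"
  by (auto simp: ps2_swap_def ps_order_ge_def add.commute)

lemma vf_apply_ps2_swap: "vf_apply (ps2_swap b) (ps2_swap a) (ps2_swap g) = ps2_swap (vf_apply a b g)"
proof -
  have "ps_dx (ps2_swap g) = ps2_swap (ps_dy g)" "ps_dy (ps2_swap g) = ps2_swap (ps_dx g)"
    by (simp_all add: ps2_swap_def ps_dx_def ps_dy_def)
  then show ?thesis
    unfolding vf_apply_def ps2_swap_add ps2_swap_mult by (simp add: ps_add_def add.commute)
qed

lemma vf_exp_ps2_swap: "vf_exp (ps2_swap b) (ps2_swap a) (ps2_swap g) = ps2_swap (vf_exp a b g)"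
proof -
  have "(vf_apply (ps2_swap b) (ps2_swap a) ^^ k) (ps2_swap g) = ps2_swap ((vf_apply a b ^^ k) g)" for k
    by (induct k) (simp_all add: vf_apply_ps2_swap)
  then have pow: "(vf_apply (ps2_swap b) (ps2_swap a) ^^ k) (ps2_swap g) i j = (vf_apply a b ^^ k) g j i"
    for k i j
    by (simp add: ps2_swap_def)
  show ?thesis
  proof (rule ext, rule ext)
    fix i j
    show "vf_exp (ps2_swap b) (ps2_swap a) (ps2_swap g) i j = ps2_swap (vf_exp a b g) i j"
      unfolding vf_exp_def pow by (simp add: ps2_swap_def add.commute)
  qed
qed

lemma pull2_eq_pull1_ps2_swap: "pull2 f = pull1 0 (ps2_swap f)"
proof -
  have "(\<Sum>n\<le>k. f n (k - n) * of_nat (n choose l) * (0::complex) ^ (n - l)) =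
      (if l \<le> k then f l (k - l) else 0)" for k l
  proof -
    have "(\<Sum>n\<le>k. f n (k - n) * of_nat (n choose l) * (0::complex) ^ (n - l)) =
        (\<Sum>n\<le>k. if n = l then f l (k - l) else 0)"
      by (intro sum.cong refl) auto
    then show ?thesis by simp
  qed
  then show ?thesis
    unfolding pull2_def pull1_def ps2_swap_def fun_eq_iff by simp
qed

lemma lift2_X_eq_lift1_X: "lift2_X a b = lift1_X 0 (ps2_swap b) (ps2_swap a)"
proof -
  have "ps_add (ps_const 0) ps_Y = ps_Y"
    by (simp add: ps_add_def ps_const_def fun_eq_iff)
  then show ?thesis
    by (simp add: lift2_X_def lift1_X_def pull2_eq_pull1_ps2_swap)
qed

lemma lift2_F_eq_lift1_F: "lift2_F p q = lift1_F 0 (ps2_swap q) (ps2_swap p)"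
proof -
  have "ps_sub h (ps_const 0) = h" for h
    by (simp add: ps_sub_def ps_const_def fun_eq_iff)
  then show ?thesis
    by (simp add: lift2_F_def lift1_F_def pull2_eq_pull1_ps2_swap ps2_swap_add ps2_swap_X ps2_swap_Y)
qed

lemma char_direction_ps2_swap:
  assumes "char_direction p q 0 1"
  shows "char_direction (ps2_swap q) (ps2_swap p) 1 0"
proof -
  have "homog_zero (ps2_swap f) k = homog_zero f k" for f k
    unfolding homog_zero_def ps2_swap_def by (metis diff_diff_cancel diff_le_self)
  moreover have "homog_eval (ps2_swap f) k 1 0 = f 0 k" for f k
  proof -
    have "homog_eval (ps2_swap f) k 1 0 = (\<Sum>i\<le>k. if i = k then f 0 k else 0)"
      unfolding homog_eval_def ps2_swap_def by (intro sum.cong refl) auto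
    then show ?thesis by simp
  qed
  moreover have "homog_eval f k 0 1 = f 0 k" for f k
  proof -
    have "homog_eval f k 0 1 = (\<Sum>i\<le>k. if i = 0 then f 0 k else 0)"
      unfolding homog_eval_def by (intro sum.cong refl) auto
    then show ?thesis by simp
  qed
  ultimately show ?thesis
    using assms unfolding char_direction_def by auto
qed

lemma vf_exp_lift2_X_eq_lift2_F:
  fixes p q a b :: ps2
  assumes p: "ps_order_ge p 2" and q: "ps_order_ge q 2"
    and a: "ps_order_ge a 2" and b: "ps_order_ge b 2"
    and ex: "vf_exp a b ps_X = ps_add ps_X p" and ey: "vf_exp a b ps_Y = ps_add ps_Y q"
    and char: "char_direction p q 0 1"
  shows "vf_exp (fst (lift2_X a b)) (snd (lift2_X a b)) ps_X = fst (lift2_F p q) \<and>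
         vf_exp (fst (lift2_X a b)) (snd (lift2_X a b)) ps_Y = snd (lift2_F p q)"
proof -
  have "vf_exp (ps2_swap b) (ps2_swap a) ps_X = ps_add ps_X (ps2_swap q)"
    using arg_cong[OF ey, of ps2_swap]
    by (simp add: vf_exp_ps2_swap[symmetric] ps2_swap_Y ps2_swap_add ps2_swap_X)
  moreover have "vf_exp (ps2_swap b) (ps2_swap a) ps_Y = ps_add ps_Y (ps2_swap p)"
    using arg_cong[OF ex, of ps2_swap]
    by (simp add: vf_exp_ps2_swap[symmetric] ps2_swap_Y ps2_swap_add ps2_swap_X)
  ultimately show ?thesis
    using vf_exp_lift1_X_eq_lift1_F[of "ps2_swap q" "ps2_swap p" "ps2_swap b" "ps2_swap a" 0]
      p q a b char_direction_ps2_swap[OF char]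
    by (simp add: ps_order_ge_ps2_swap lift2_X_eq_lift1_X lift2_F_eq_lift1_F)
qed

theorem mainTheorem4:
  fixes p q a b :: ps2
  assumes "ps_order_ge p 2" and "ps_order_ge q 2"
    and "ps_convergent p" and "ps_convergent q"
    and "ps_order_ge a 2" and "ps_order_ge b 2"
    and "vf_exp a b ps_X = ps_add ps_X p"
    and "vf_exp a b ps_Y = ps_add ps_Y q"
  shows "(\<forall>c. char_direction p q 1 c \<longrightarrow>
            vf_exp (fst (lift1_X c a b)) (snd (lift1_X c a b)) ps_X = fst (lift1_F c p q) \<and>
            vf_exp (fst (lift1_X c a b)) (snd (lift1_X c a b)) ps_Y = snd (lift1_F c p q))
       \<and> (char_direction p q 0 1 \<longrightarrow>
            vf_exp (fst (lift2_X a b)) (snd (lift2_X a b)) ps_X = fst (lift2_F p q) \<and>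
            vf_exp (fst (lift2_X a b)) (snd (lift2_X a b)) ps_Y = snd (lift2_F p q))"
  using vf_exp_lift1_X_eq_lift1_F[OF assms(1,2,5-8)] vf_exp_lift2_X_eq_lift2_F[OF assms(1,2,5-8)]
  by blast

end
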